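(* Both sets $$\{\alpha(W')\alpha(W'')(\mathbf I)\mid W'\in\mathcal W^0(\mathfrak X^{(1)}_{1\otimes2}),\ W''\in\mathcal W^0(\mathfrak X^{(2)}_{1\otimes2})\}$$ and $$\{\alpha(W')\alpha(W'')(\mathbf I)\mid W'\in\mathcal W^0(\mathfrak X^{(2)}_{2\otimes1}),\ W''\in\mathcal W^0(\mathfrak X^{(1)}_{2\otimes1})\}$$ are linearly independent subsets of $\mathcal U(\mathfrak X)$ (distinct pairs $(W',W'')$ giving linearly independent elements).
   Context: $\mathfrak X$ is the complex Lie algebra generated by $Z_1,Z_{11},Z_2,Z_{22},Z_{12}$ subject only to $[Z_1,Z_2]=[Z_{11},Z_2]=[Z_1,Z_{22}]=0$ and $[Z_{11},Z_{22}]=-[Z_{11},Z_{12}]=[Z_{22},Z_{12}]=-[Z_1-Z_2,Z_{12}]$; $\mathcal U(\mathfrak X)$ is its universal enveloping algebra with unit $\mathbf I$. $\mathfrak X^{(1)}_{1\otimes2},\mathfrak X^{(2)}_{1\otimes2},\mathfrak X^{(2)}_{2\otimes1},\mathfrak X^{(1)}_{2\otimes1}$ are the Lie subalgebras generated by $\{Z_1,Z_{11},Z_{12}\},\{Z_2,Z_{22}\},\{Z_2,Z_{22},Z_{12}\},\{Z_1,Z_{11}\}$; $\mathcal W^0(\mathfrak A)$ is the set of words (noncommutative monomials, including the empty word) in the generators of $\mathfrak A$ not ending with $Z_1$ or $Z_2$. For a word $W$, $\alpha(W)\in\mathrm{End}(\mathcal U(\mathfrak X))$ is the composition, in the order of the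 letters, of the operators $Z_1\mapsto\mathrm{ad}(Z_1)$, $Z_2\mapsto\mathrm{ad}(Z_2)$, $Z_{11}\mapsto\mu(Z_{11})$, $Z_{22}\mapsto\mu(Z_{22})$, $Z_{12}\mapsto\mu(Z_{12})$, where $\mathrm{ad}(X)F=[X,F]$ and $\mu(X)F=XF$. *)

theory Defs
  imports Complex_Main
begin

datatype gen = Z1 | Z11 | Z2 | Z22 | Z12

text \<open>Elements of the free associative algebra C<Z1,Z11,Z2,Z22,Z12> (= tensor algebra),
  represented by their coefficient function on words; only finitely supported
  functions arise below.\<close>
type_synonym fa = "gen list \<Rightarrow> complex"

definition fa_zero :: fa where "fa_zero = (\<lambda>w. 0)"
definition fa_one :: fa where "fa_one = (\<lambda>w. if w = [] then 1 else 0)"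
definition fa_mono :: "gen list \<Rightarrow> fa" where "fa_mono u = (\<lambda>w. if w = u then 1 else 0)"
definition fa_gen :: "gen \<Rightarrow> fa" where "fa_gen g = fa_mono [g]"
definition fa_add :: "fa \<Rightarrow> fa \<Rightarrow> fa" where "fa_add p q = (\<lambda>w. p w + q w)"
definition fa_sub :: "fa \<Rightarrow> fa \<Rightarrow> fa" where "fa_sub p q = (\<lambda>w. p w - q w)"
definition fa_smult :: "complex \<Rightarrow> fa \<Rightarrow> fa" where "fa_smult c p = (\<lambda>w. c * p w)"
definition fa_mult :: "fa \<Rightarrow> fa \<Rightarrow> fa" where
  "fa_mult p q = (\<lambda>w. \<Sum>i\<le>length w. p (take i w) * q (drop i w))"
definition fa_comm :: "fa \<Rightarrow> fa \<Rightarrow> fa" where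
  "fa_comm a b = fa_sub (fa_mult a b) (fa_mult b a)"

text \<open>Defining relations of X, written as associative commutators.\<close>
definition X_rels :: "fa set" where
  "X_rels = {
     fa_comm (fa_gen Z1) (fa_gen Z2),
     fa_comm (fa_gen Z11) (fa_gen Z2),
     fa_comm (fa_gen Z1) (fa_gen Z22),
     fa_add (fa_comm (fa_gen Z11) (fa_gen Z22)) (fa_comm (fa_gen Z11) (fa_gen Z12)),
     fa_add (fa_comm (fa_gen Z11) (fa_gen Z22)) (fa_comm (fa_sub (fa_gen Z1) (fa_gen Z2)) (fa_gen Z12)),
     fa_add (fa_comm (fa_gen Z22) (fa_gen Z12)) (fa_comm (fa_sub (fa_gen Z1) (fa_gen Z2)) (fa_gen Z12))}"

text \<open>Two-sided ideal of the free associative algebra generated by the relations;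
  U(X) is the quotient of the free algebra by this ideal.\<close>
inductive_set X_ideal :: "fa set" where
  rel: "r \<in> X_rels \<Longrightarrow> r \<in> X_ideal"
| zero: "fa_zero \<in> X_ideal"
| add: "a \<in> X_ideal \<Longrightarrow> b \<in> X_ideal \<Longrightarrow> fa_add a b \<in> X_ideal"
| smult: "a \<in> X_ideal \<Longrightarrow> fa_smult c a \<in> X_ideal"
| lmult: "a \<in> X_ideal \<Longrightarrow> fa_mult (fa_mono u) a \<in> X_ideal"
| rmult: "a \<in> X_ideal \<Longrightarrow> fa_mult a (fa_mono u) \<in> X_ideal"

fun alpha_gen :: "gen \<Rightarrow> fa \<Rightarrow> fa" where
  "alpha_gen Z1 F = fa_comm (fa_gen Z1) F"
| "alpha_gen Z2 F = fa_comm (fa_gen Z2) F"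
| "alpha_gen Z11 F = fa_mult (fa_gen Z11) F"
| "alpha_gen Z22 F = fa_mult (fa_gen Z22) F"
| "alpha_gen Z12 F = fa_mult (fa_gen Z12) F"

fun alpha :: "gen list \<Rightarrow> fa \<Rightarrow> fa" where
  "alpha [] F = F"
| "alpha (g # W) F = alpha_gen g (alpha W F)"

definition W0 :: "gen set \<Rightarrow> gen list set" where
  "W0 G = {w. set w \<subseteq> G \<and> (w \<noteq> [] \<longrightarrow> last w \<notin> {Z1, Z2})}"

definition lin_indep_U :: "'i set \<Rightarrow> ('i \<Rightarrow> fa) \<Rightarrow> bool" where
  "lin_indep_U J f \<longleftrightarrow>
     (\<forall>S c. finite S \<longrightarrow> S \<subseteq> J \<longrightarrow> (\<lambda>w. \<Sum>p\<in>S. c p * f p w) \<in> X_ideal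
        \<longrightarrow> (\<forall>p\<in>S. c p = 0))"

definition elemU :: "gen list \<times> gen list \<Rightarrow> fa" where
  "elemU p = alpha (fst p) (alpha (snd p) fa_one)"

end

theory Submission
  imports Defs "HOL-Library.List_Lexorder"
begin

text \<open>The letters \<open>Z1, Z11, Z12\<close> generate a subalgebra \<open>a\<close> that \<open>Z2\<close> and \<open>Z22\<close> normalise, so
  \<open>U(X)\<close> acts on words in the five letters: letters of \<open>a\<close> are prepended, while \<open>Z2\<close> and \<open>Z22\<close>
  are commuted past the leading letters of \<open>a\<close> using the brackets \<open>[Z2, a], [Z22, a] \<subseteq> a\<close>. The
  matrix coefficients of this action vanish on the defining ideal, and at the empty word they send
  \<open>\<alpha>(W')\<alpha>(W'')(I)\<close> to the product \<open>\<alpha>(W')1 \<cdot> \<alpha>(W'')1\<close> in the free algebra. These products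
  are linearly independent: the two factors are supported on disjoint alphabets, and each family
  \<open>\<alpha>(W)1\<close> is unitriangular, with coefficient 1 at \<open>W\<close> and support in the words lexicographically
  above \<open>W\<close> for a letter order in which \<open>Z1\<close> (resp. \<open>Z2\<close>) is least, because \<open>W\<close> does not end
  in that letter. The second family is the image of the first under the automorphism exchanging
  the indices 1 and 2.\<close>

section \<open>The free associative algebra\<close>

lemma fa_mult_mono_left:
  "fa_mult (fa_mono u) F w = (if take (length u) w = u then F (drop (length u) w) else 0)"
proof -
  have "fa_mult (fa_mono u) F w = (\<Sum>i\<le>length w. if i = length u then
      (if take (length u) w = u then F (drop (length u) w) else 0) else 0)"
    unfolding fa_mult_def fa_mono_def by (rule sum.cong) auto
  also have "\<dots> = (if take (length u) w = u then F (drop (length u) w) else 0)"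
    by (auto simp: sum.delta dest: arg_cong[where f=length])
  finally show ?thesis .
qed

lemma fa_mult_mono_right:
  "fa_mult F (fa_mono u) w = (if length u \<le> length w \<and> drop (length w - length u) w = u
      then F (take (length w - length u) w) else 0)"
proof -
  have "fa_mult F (fa_mono u) w = (\<Sum>i\<le>length w. if i = length w - length u then
      (if length u \<le> length w \<and> drop (length w - length u) w = u
       then F (take (length w - length u) w) else 0) else 0)"
    unfolding fa_mult_def fa_mono_def by (rule sum.cong) auto
  also have "\<dots> = (if length u \<le> length w \<and> drop (length w - length u) w = u
      then F (take (length w - length u) w) else 0)"
    by (auto simp: sum.delta)
  finally show ?thesis .
qed

lemma fa_mult_assoc: "fa_mult (fa_mult p q) r = fa_mult p (fa_mult q r)"
proof
  fix w :: "gen list"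
  let ?n = "length w"
  define g where "g i k = p (take i w) * q (take k (drop i w)) * r (drop (i + k) w)" for i k
  have "fa_mult (fa_mult p q) r w = (\<Sum>j\<le>?n. \<Sum>i\<le>j. g i (j - i))"
    unfolding fa_mult_def g_def
    by (auto simp: sum_distrib_right min_def take_drop intro!: sum.cong)
  also have "\<dots> = (\<Sum>(i, k)\<in>{(i, k). i + k \<le> ?n}. g i k)"
    by (rule sum.triangle_reindex_eq[symmetric])
  also have "{(i, k). i + k \<le> ?n} = Sigma {..?n} (\<lambda>i. {..?n - i})" by auto
  also have "(\<Sum>(i, k)\<in>Sigma {..?n} (\<lambda>i. {..?n - i}). g i k) = (\<Sum>i\<le>?n. \<Sum>k\<le>?n - i. g i k)"
    by (rule sum.Sigma[symmetric]) auto
  also have "\<dots> = fa_mult p (fa_mult q r) w"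
    unfolding fa_mult_def g_def
    by (auto simp: sum_distrib_left mult.assoc add.commute intro!: sum.cong)
  finally show "fa_mult (fa_mult p q) r w = fa_mult p (fa_mult q r) w" .
qed

lemma fa_one_eq_mono: "fa_one = fa_mono []"
  by (simp add: fa_one_def fa_mono_def)

lemma fa_mult_one_left [simp]: "fa_mult fa_one p = p"
  using fa_mult_mono_left[of "[]" p] by (simp add: fa_one_eq_mono fun_eq_iff)

lemma fa_mult_one_right [simp]: "fa_mult p fa_one = p"
  using fa_mult_mono_right[of p "[]"] by (simp add: fa_one_eq_mono fun_eq_iff)

lemma fa_mult_mono_mono: "fa_mult (fa_mono u) (fa_mono v) = fa_mono (u @ v)"
  by (rule ext, simp only: fa_mult_mono_left, auto simp: fa_mono_def, metis append_take_drop_id)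

lemma fa_mult_gen_gen: "fa_mult (fa_gen a) (fa_gen b) = fa_mono [a, b]"
  by (simp add: fa_gen_def fa_mult_mono_mono)

lemma fa_mult_sub_left: "fa_mult (fa_sub p q) r = fa_sub (fa_mult p r) (fa_mult q r)"
  by (simp add: fun_eq_iff fa_mult_def fa_sub_def algebra_simps sum_subtractf)

lemma fa_mult_sub_right: "fa_mult r (fa_sub p q) = fa_sub (fa_mult r p) (fa_mult r q)"
  by (simp add: fun_eq_iff fa_mult_def fa_sub_def algebra_simps sum_subtractf)

lemma fa_mult_gen_left:
  "fa_mult (fa_gen g) F t = (case t of [] \<Rightarrow> 0 | a # r \<Rightarrow> if a = g then F r else 0)"
  by (cases t) (auto simp: fa_gen_def fa_mult_mono_left)

lemma fa_mult_gen_right: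
  "fa_mult F (fa_gen g) t = (if t \<noteq> [] \<and> last t = g then F (butlast t) else 0)"
  by (cases t rule: rev_cases) (auto simp: fa_gen_def fa_mult_mono_right)

section \<open>A representation of U(X) on words\<close>

definition words :: "nat \<Rightarrow> gen list set" where
  "words n = {w. length w = n}"

lemma mem_words [simp]: "w \<in> words n \<longleftrightarrow> length w = n"
  by (simp add: words_def)

lemma finite_words [simp]: "finite (words n)"
proof -
  have "(UNIV :: gen set) = {Z1, Z11, Z2, Z22, Z12}"
    using gen.exhaust by auto
  then have "finite (UNIV :: gen set)" by (metis finite.emptyI finite_insert)
  then show ?thesis
    using finite_lists_length_eq[of "UNIV :: gen set" n] by (simp add: words_def)
qed

lemma sum_words_delta:
  fixes f :: "gen list \<Rightarrow> complex"
  shows "(\<Sum>t\<in>words n. f t * (if t = v then 1 else 0)) = (if length v = n then f v else 0)"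
proof -
  have "(\<Sum>t\<in>words n. f t * (if t = v then 1 else 0)) = (\<Sum>t\<in>words n. if t = v then f v else 0)"
    by (rule sum.cong) auto
  then show ?thesis by (simp add: sum.delta')
qed

lemma sum_words_prefix:
  "(\<Sum>s\<in>words n. if take (length u) s = u then f (drop (length u) s) else 0)
     = (if length u \<le> n then (\<Sum>s\<in>words (n - length u). f s) else 0)"
proof (cases "length u \<le> n")
  case True
  let ?g = "\<lambda>s. if take (length u) s = u then f (drop (length u) s) else 0"
  have "(\<Sum>s\<in>words n. ?g s) = (\<Sum>s\<in>(\<lambda>s. u @ s) ` words (n - length u). ?g s)"
  proof (rule sum.mono_neutral_right)
    show "(\<lambda>s. u @ s) ` words (n - length u) \<subseteq> words n" using True by auto
    show "\<forall>s\<in>words n - (\<lambda>s. u @ s) ` words (n - length u). ?g s = 0"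
    proof
      fix s assume s: "s \<in> words n - (\<lambda>s. u @ s) ` words (n - length u)"
      show "?g s = 0"
      proof (rule ccontr)
        assume "?g s \<noteq> 0"
        then have "s = u @ drop (length u) s" by (metis append_take_drop_id)
        moreover have "drop (length u) s \<in> words (n - length u)" using s by auto
        ultimately show False using s by blast
      qed
    qed
  qed simp
  also have "\<dots> = (\<Sum>s\<in>words (n - length u). f s)"
    by (subst sum.reindex) (auto simp: inj_on_def)
  finally show ?thesis using True by simp
next
  case False
  then have "take (length u) s \<noteq> u" if "s \<in> words n" for s
    using that by (auto dest: arg_cong[where f=length])
  then show ?thesis using False by simp
qed

lemma sum_words_suffix:
  "(\<Sum>s\<in>words n. if length u \<le> length s \<and> drop (length s - length u) s = u
       then f (take (length s - length u) s) else 0)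
     = (if length u \<le> n then (\<Sum>s\<in>words (n - length u). f s) else 0)"
proof (cases "length u \<le> n")
  case True
  let ?g = "\<lambda>s. if length u \<le> length s \<and> drop (length s - length u) s = u
      then f (take (length s - length u) s) else 0"
  have "(\<Sum>s\<in>words n. ?g s) = (\<Sum>s\<in>(\<lambda>s. s @ u) ` words (n - length u). ?g s)"
  proof (rule sum.mono_neutral_right)
    show "(\<lambda>s. s @ u) ` words (n - length u) \<subseteq> words n" using True by auto
    show "\<forall>s\<in>words n - (\<lambda>s. s @ u) ` words (n - length u). ?g s = 0"
    proof
      fix s assume s: "s \<in> words n - (\<lambda>s. s @ u) ` words (n - length u)"
      show "?g s = 0"
      proof (rule ccontr)
        assume "?g s \<noteq> 0"
        then have "s = take (length s - length u) s @ u" by (metis append_take_drop_id)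
        moreover have "take (length s - length u) s \<in> words (n - length u)" using s by auto
        ultimately show False using s by blast
      qed
    qed
  qed simp
  also have "\<dots> = (\<Sum>s\<in>words (n - length u). f s)"
    by (subst sum.reindex) (auto simp: inj_on_def)
  finally show ?thesis using True by simp
qed simp

fun A_gen :: "gen \<Rightarrow> bool" where
  "A_gen Z1 = True" | "A_gen Z11 = True" | "A_gen Z12 = True"
| "A_gen Z2 = False" | "A_gen Z22 = False"

text \<open>\<open>bracket_coeff y x a b\<close> is the coefficient of \<open>a b\<close> in \<open>[y, x]\<close> for \<open>y \<in> {Z2, Z22}\<close>
  and \<open>x \<in> {Z1, Z11, Z12}\<close>; by the defining relations \<open>[Z2, Z12] = [Z1, Z12] - [Z11, Z12]\<close>,
  \<open>[Z22, Z11] = [Z11, Z12]\<close>, \<open>[Z22, Z12] = - [Z11, Z12]\<close>, and all other such brackets vanish.\<close>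
fun bracket_coeff :: "gen \<Rightarrow> gen \<Rightarrow> gen \<Rightarrow> gen \<Rightarrow> complex" where
  "bracket_coeff Z2 Z12 a b = (if a = Z1 \<and> b = Z12 then 1 else if a = Z12 \<and> b = Z1 then -1
      else if a = Z11 \<and> b = Z12 then -1 else if a = Z12 \<and> b = Z11 then 1 else 0)"
| "bracket_coeff Z22 Z11 a b = (if a = Z11 \<and> b = Z12 then 1 else if a = Z12 \<and> b = Z11 then -1 else 0)"
| "bracket_coeff Z22 Z12 a b = (if a = Z11 \<and> b = Z12 then -1 else if a = Z12 \<and> b = Z11 then 1 else 0)"
| "bracket_coeff _ _ a b = 0"

definition bracket_term :: "gen \<Rightarrow> gen \<Rightarrow> gen list \<Rightarrow> gen list \<Rightarrow> complex" where
  "bracket_term y x w t = (case t of a # b # r \<Rightarrow> if r = w then bracket_coeff y x a b else 0 | _ \<Rightarrow> 0)"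

text \<open>\<open>act_B y w t\<close> is the coefficient of \<open>t\<close> in \<open>y \<cdot> w\<close>; \<open>y\<close> is moved past the leading letters
  \<open>x\<close> with \<open>A_gen x\<close> by \<open>y x = [y, x] + x y\<close>.\<close>
fun act_B :: "gen \<Rightarrow> gen list \<Rightarrow> gen list \<Rightarrow> complex" where
  "act_B y [] t = (if t = [y] then 1 else 0)"
| "act_B y (x # w) t = (if A_gen x
      then bracket_term y x w t + (case t of [] \<Rightarrow> 0 | a # r \<Rightarrow> if a = x then act_B y w r else 0)
      else (if t = y # x # w then 1 else 0))"

definition act_gen :: "gen \<Rightarrow> gen list \<Rightarrow> gen list \<Rightarrow> complex" where
  "act_gen g w t = (if A_gen g then (if t = g # w then 1 else 0) else act_B g w t)"

fun act_word :: "gen list \<Rightarrow> gen list \<Rightarrow> gen list \<Rightarrow> complex" where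
  "act_word [] v t = (if t = v then 1 else 0)"
| "act_word (g # s) v t = (\<Sum>t'\<in>words (length t - 1). act_gen g t' t * act_word s v t')"

text \<open>\<open>rho F v t\<close> is the coefficient of \<open>t\<close> in \<open>F \<cdot> v\<close>.\<close>
definition rho :: "fa \<Rightarrow> gen list \<Rightarrow> gen list \<Rightarrow> complex" where
  "rho F v t = (\<Sum>s\<in>words (length t - length v). F s * act_word s v t)"

lemma bracket_term_length: "bracket_term y x w t \<noteq> 0 \<Longrightarrow> length t = Suc (Suc (length w))"
  by (auto simp: bracket_term_def split: list.splits if_splits)

lemma act_B_length: "act_B y w t \<noteq> 0 \<Longrightarrow> length t = Suc (length w)"
proof (induction w arbitrary: t)
  case Nil
  then show ?case by (auto split: if_splits)
next
  case (Cons x w)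
  show ?case
  proof (cases "A_gen x")
    case True
    with Cons.prems have "bracket_term y x w t \<noteq> 0
        \<or> (case t of [] \<Rightarrow> 0 | a # r \<Rightarrow> if a = x then act_B y w r else 0) \<noteq> 0"
      by auto
    then show ?thesis
    proof
      assume "bracket_term y x w t \<noteq> 0"
      then show ?thesis by (simp add: bracket_term_length)
    next
      assume "(case t of [] \<Rightarrow> 0 | a # r \<Rightarrow> if a = x then act_B y w r else 0) \<noteq> 0"
      then show ?thesis using Cons.IH by (auto split: list.splits if_splits)
    qed
  next
    case False
    with Cons.prems show ?thesis by (auto split: if_splits)
  qed
qed

lemma act_gen_length: "act_gen g w t \<noteq> 0 \<Longrightarrow> length t = Suc (length w)"
  by (auto simp: act_gen_def split: if_splits dest: act_B_length)

lemma act_word_length: "act_word s v t \<noteq> 0 \<Longrightarrow> length t = length s + length v"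
proof (induction s arbitrary: t)
  case Nil
  then show ?case by (auto split: if_splits)
next
  case (Cons g s)
  have "\<exists>t'\<in>words (length t - 1). act_gen g t' t * act_word s v t' \<noteq> 0"
    using Cons.prems by (metis (mono_tags, lifting) act_word.simps(2) sum.neutral)
  then obtain t' where "act_gen g t' t \<noteq> 0" "act_word s v t' \<noteq> 0" by auto
  then show ?case using Cons.IH act_gen_length by force
qed

lemma act_word_single: "act_word [g] v t = act_gen g v t"
  by (cases "act_gen g v t = 0") (auto simp: sum_words_delta dest: act_gen_length)

lemma act_word_append:
  "act_word (s1 @ s2) v t = (\<Sum>t'\<in>words (length s2 + length v). act_word s1 t' t * act_word s2 v t')"
proof (induction s1 arbitrary: t)
  case Nil
  have "(\<Sum>t'\<in>words (length s2 + length v). act_word [] t' t * act_word s2 v t')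
      = (\<Sum>t'\<in>words (length s2 + length v). act_word s2 v t' * (if t' = t then 1 else 0))"
    by (rule sum.cong) auto
  then show ?case using act_word_length[of s2 v t] by (auto simp: sum_words_delta)
next
  case (Cons g s1)
  have "act_word ((g # s1) @ s2) v t = (\<Sum>t''\<in>words (length t - 1). act_gen g t'' t *
      (\<Sum>t'\<in>words (length s2 + length v). act_word s1 t' t'' * act_word s2 v t'))"
    by (simp add: Cons.IH)
  also have "\<dots> = (\<Sum>t''\<in>words (length t - 1). \<Sum>t'\<in>words (length s2 + length v).
      act_gen g t'' t * act_word s1 t' t'' * act_word s2 v t')"
    by (simp add: sum_distrib_left mult.assoc)
  also have "\<dots> = (\<Sum>t'\<in>words (length s2 + length v). \<Sum>t''\<in>words (length t - 1).
      act_gen g t'' t * act_word s1 t' t'' * act_word s2 v t')"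
    by (rule sum.swap)
  also have "\<dots> = (\<Sum>t'\<in>words (length s2 + length v). act_word (g # s1) t' t * act_word s2 v t')"
    by (simp add: sum_distrib_right)
  finally show ?case .
qed

lemma rho_short:
  assumes "length t < length v"
  shows "rho F v t = 0"
proof -
  have "words 0 = {[]}" by (auto simp: words_def)
  with assms show ?thesis by (auto simp: rho_def)
qed

lemma rho_mono: "rho (fa_mono u) v t = act_word u v t"
proof -
  have "rho (fa_mono u) v t = (\<Sum>s\<in>words (length t - length v). if s = u then act_word u v t else 0)"
    unfolding rho_def fa_mono_def by (rule sum.cong) auto
  then show ?thesis
    by (cases "act_word u v t = 0") (auto simp: sum.delta' dest: act_word_length)
qed

lemma rho_add: "rho (fa_add p q) v t = rho p v t + rho q v t"
  by (simp add: rho_def fa_add_def algebra_simps sum.distrib)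

lemma rho_sub: "rho (fa_sub p q) v t = rho p v t - rho q v t"
  by (simp add: rho_def fa_sub_def algebra_simps sum_subtractf)

lemma rho_smult: "rho (fa_smult c p) v t = c * rho p v t"
  by (simp add: rho_def fa_smult_def sum_distrib_left mult.assoc)

lemma rho_zero: "rho fa_zero v t = 0"
  by (simp add: rho_def fa_zero_def)

lemma rho_lincomb: "rho (\<lambda>w. \<Sum>p\<in>S. c p * f p w) v t = (\<Sum>p\<in>S. c p * rho (f p) v t)"
  unfolding rho_def by (simp add: sum_distrib_right sum_distrib_left mult.assoc) (rule sum.swap)

lemma rho_mult_mono_left_short:
  assumes "length t < length u + length v"
  shows "rho (fa_mult (fa_mono u) F) v t = 0"
  unfolding rho_def fa_mult_mono_left
proof (rule sum.neutral, intro ballI)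
  fix s assume s: "s \<in> words (length t - length v)"
  show "(if take (length u) s = u then F (drop (length u) s) else 0) * act_word s v t = 0"
  proof (cases "take (length u) s = u")
    case True
    then have "length u \<le> length s" by (metis nat_le_linear take_all order_refl)
    then have "act_word s v t = 0" using act_word_length[of s v t] s assms by auto
    then show ?thesis by simp
  qed simp
qed

lemma rho_mult_mono_left:
  "rho (fa_mult (fa_mono u) F) v t = (\<Sum>t'\<in>words (length t - length u). act_word u t' t * rho F v t')"
proof (cases "length u + length v \<le> length t")
  case True
  define m where "m = length t - length v - length u"
  have "rho (fa_mult (fa_mono u) F) v t = (\<Sum>s\<in>words (length t - length v).
      if take (length u) s = u then F (drop (length u) s) * act_word (u @ drop (length u) s) v t else 0)"
    unfolding rho_def fa_mult_mono_left by (rule sum.cong) (auto, metis append_take_drop_id)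
  also have "\<dots> = (if length u \<le> length t - length v
      then (\<Sum>s\<in>words (length t - length v - length u). F s * act_word (u @ s) v t) else 0)"
    by (rule sum_words_prefix)
  also have "\<dots> = (\<Sum>s\<in>words m. F s * act_word (u @ s) v t)"
    using True by (simp add: m_def)
  also have "\<dots> = (\<Sum>s\<in>words m. F s * (\<Sum>t'\<in>words (m + length v). act_word u t' t * act_word s v t'))"
    by (rule sum.cong) (auto simp: act_word_append)
  also have "\<dots> = (\<Sum>s\<in>words m. \<Sum>t'\<in>words (m + length v). act_word u t' t * (F s * act_word s v t'))"
    by (simp add: sum_distrib_left algebra_simps)
  also have "\<dots> = (\<Sum>t'\<in>words (m + length v). \<Sum>s\<in>words m. act_word u t' t * (F s * act_word s v t'))"
    by (rule sum.swap)
  also have "\<dots> = (\<Sum>t'\<in>words (m + length v). act_word u t' t * rho F v t')"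
    by (rule sum.cong) (auto simp: rho_def sum_distrib_left)
  also have "m + length v = length t - length u" using True by (simp add: m_def)
  finally show ?thesis .
next
  case False
  have "act_word u t' t * rho F v t' = 0" for t'
    using act_word_length[of u t' t] rho_short[of t' v F] False by fastforce
  then have "(\<Sum>t'\<in>words (length t - length u). act_word u t' t * rho F v t') = 0"
    by (simp only: sum.neutral_const)
  then show ?thesis
    using False by (simp only: rho_mult_mono_left_short not_le)
qed

lemma rho_mult_mono_right_short:
  assumes "length t < length u + length v"
  shows "rho (fa_mult F (fa_mono u)) v t = 0"
  unfolding rho_def fa_mult_mono_right
proof (rule sum.neutral, intro ballI)
  fix s assume s: "s \<in> words (length t - length v)"
  show "(if length u \<le> length s \<and> drop (length s - length u) s = u
      then F (take (length s - length u) s) else 0) * act_word s v t = 0"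
  proof (cases "length u \<le> length s")
    case True
    then have "act_word s v t = 0" using act_word_length[of s v t] s assms by auto
    then show ?thesis by simp
  qed simp
qed

lemma rho_mult_mono_right:
  "rho (fa_mult F (fa_mono u)) v t = (\<Sum>t'\<in>words (length u + length v). act_word u v t' * rho F t' t)"
proof (cases "length u + length v \<le> length t")
  case True
  define m where "m = length t - length v - length u"
  have "rho (fa_mult F (fa_mono u)) v t = (\<Sum>s\<in>words (length t - length v).
      if length u \<le> length s \<and> drop (length s - length u) s = u
      then F (take (length s - length u) s) * act_word (take (length s - length u) s @ u) v t else 0)"
    unfolding rho_def fa_mult_mono_right by (rule sum.cong) (auto, metis append_take_drop_id)
  also have "\<dots> = (if length u \<le> length t - length v
      then (\<Sum>s\<in>words (length t - length v - length u). F s * act_word (s @ u) v t) else 0)"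
    by (rule sum_words_suffix)
  also have "\<dots> = (\<Sum>s\<in>words m. F s * act_word (s @ u) v t)"
    using True by (simp add: m_def)
  also have "\<dots> = (\<Sum>s\<in>words m. F s * (\<Sum>t'\<in>words (length u + length v). act_word s t' t * act_word u v t'))"
    by (rule sum.cong) (auto simp: act_word_append)
  also have "\<dots> = (\<Sum>s\<in>words m. \<Sum>t'\<in>words (length u + length v). act_word u v t' * (F s * act_word s t' t))"
    by (simp add: sum_distrib_left algebra_simps)
  also have "\<dots> = (\<Sum>t'\<in>words (length u + length v). \<Sum>s\<in>words m. act_word u v t' * (F s * act_word s t' t))"
    by (rule sum.swap)
  also have "\<dots> = (\<Sum>t'\<in>words (length u + length v). act_word u v t' * rho F t' t)"
    using True by (intro sum.cong) (auto simp: rho_def sum_distrib_left m_def add.commute)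
  finally show ?thesis .
next
  case False
  then show ?thesis by (simp add: rho_mult_mono_right_short rho_short)
qed

declare act_word.simps(2) [simp del]

lemma sum_act_gen_A:
  assumes "A_gen x"
  shows "(\<Sum>t'\<in>words (length t - 1). act_gen x t' t * X t')
    = (case t of [] \<Rightarrow> 0 | a # r \<Rightarrow> if a = x then X r else 0)"
proof (cases t)
  case Nil
  then show ?thesis using assms by (simp add: act_gen_def)
next
  case (Cons a r)
  have "(\<Sum>t'\<in>words (length t - 1). act_gen x t' t * X t')
      = (\<Sum>t'\<in>words (length r). if t' = r then (if a = x then X r else 0) else 0)"
    using assms Cons by (intro sum.cong) (auto simp: act_gen_def)
  then show ?thesis using Cons by (simp add: sum.delta')
qed

lemma act_word_A_gen_Cons:
  "A_gen a \<Longrightarrow> act_word (a # s) v t = (case t of [] \<Rightarrow> 0 | c # r \<Rightarrow> if c = a then act_word s v r else 0)"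
  unfolding act_word.simps(2) by (rule sum_act_gen_A)

lemma act_word_B_A:
  assumes "A_gen x" "\<not> A_gen y"
  shows "act_word [y, x] v t = act_B y (x # v) t"
proof -
  have "act_word [y, x] v t = (\<Sum>t'\<in>words (length t - 1). act_gen y t' t * act_gen x v t')"
    unfolding act_word.simps(2)[of y "[x]"] act_word_single ..
  also have "\<dots> = (\<Sum>t'\<in>words (length t - 1). act_gen y t' t * (if t' = x # v then 1 else 0))"
    using assms(1) by (simp add: act_gen_def eq_commute)
  also have "\<dots> = act_gen y (x # v) t"
    by (cases "act_gen y (x # v) t = 0") (auto simp: sum_words_delta dest: act_gen_length)
  finally show ?thesis using assms(2) by (simp add: act_gen_def)
qed

lemma rho_rel: "r \<in> X_rels \<Longrightarrow> rho r v t = 0"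
  unfolding X_rels_def
  by (auto simp: fa_comm_def fa_mult_gen_gen fa_mult_sub_left fa_mult_sub_right rho_sub rho_add
      rho_mono act_word_A_gen_Cons act_word_single act_word_B_A act_gen_def bracket_term_def
      split: list.split)

lemma rho_ideal: "a \<in> X_ideal \<Longrightarrow> rho a v t = 0"
proof (induction a arbitrary: v t rule: X_ideal.induct)
  case (rel r)
  then show ?case by (rule rho_rel)
next
  case zero
  then show ?case by (rule rho_zero)
next
  case (add a b)
  then show ?case by (simp add: rho_add)
next
  case (smult a c)
  then show ?case by (simp add: rho_smult)
next
  case (lmult a u)
  then show ?case by (simp add: rho_mult_mono_left)
next
  case (rmult a u)
  then show ?case by (simp add: rho_mult_mono_right)
qed

section \<open>The action of \<open>\<alpha>(W')\<alpha>(W'')(I)\<close> on the empty word\<close>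

definition supported :: "fa \<Rightarrow> gen set \<Rightarrow> bool" where
  "supported F A \<longleftrightarrow> (\<forall>s. F s \<noteq> 0 \<longrightarrow> set s \<subseteq> A)"

lemma supported_one: "supported fa_one A"
  by (simp add: supported_def fa_one_def)

lemma supported_sub: "supported p A \<Longrightarrow> supported q A \<Longrightarrow> supported (fa_sub p q) A"
  unfolding supported_def fa_sub_def by (metis diff_zero diff_self)

lemma supported_mult_gen_left: "supported F A \<Longrightarrow> g \<in> A \<Longrightarrow> supported (fa_mult (fa_gen g) F) A"
  unfolding supported_def fa_mult_gen_left by (auto split: list.splits if_splits)

lemma supported_mult_gen_right:
  assumes "supported F A" "g \<in> A"
  shows "supported (fa_mult F (fa_gen g)) A"
  unfolding supported_def fa_mult_gen_right
proof (intro allI impI)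
  fix s assume "(if s \<noteq> [] \<and> last s = g then F (butlast s) else 0) \<noteq> 0"
  then have "s = butlast s @ [g]" "set (butlast s) \<subseteq> A"
    using assms(1) by (auto simp: supported_def split: if_splits)
  then show "set s \<subseteq> A" using assms(2) by (metis Un_subset_iff empty_set empty_subsetI
    insert_subset list.simps(15) set_append)
qed

lemma supported_alpha: "set W \<subseteq> A \<Longrightarrow> supported F A \<Longrightarrow> supported (alpha W F) A"
proof (induction W)
  case (Cons g W)
  then have "supported (alpha W F) A" "g \<in> A" by auto
  then show ?case
    by (cases g) (auto simp: fa_comm_def intro!: supported_sub supported_mult_gen_left supported_mult_gen_right)
qed simp

lemma act_B_Z1_pow:
  "set s \<subseteq> {Z2, Z22} \<Longrightarrow> act_B y (replicate k Z1 @ s) t = (if t = replicate k Z1 @ y # s then 1 else 0)"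
proof (induction k arbitrary: t)
  case 0
  then show ?case by (cases s) auto
next
  case (Suc k)
  have "bracket_term y Z1 (replicate k Z1 @ s) t = 0"
    by (cases y) (auto simp: bracket_term_def split: list.split)
  then show ?case using Suc by (auto split: list.split)
qed

lemma act_word_B_word:
  "set s \<subseteq> {Z2, Z22} \<Longrightarrow> act_word s (replicate k Z1) t = (if t = replicate k Z1 @ s then 1 else 0)"
proof (induction s arbitrary: t)
  case (Cons y s)
  then have y: "\<not> A_gen y" and s: "set s \<subseteq> {Z2, Z22}" by auto
  have "act_word (y # s) (replicate k Z1) t
      = (\<Sum>t'\<in>words (length t - 1). act_gen y t' t * (if t' = replicate k Z1 @ s then 1 else 0))"
    by (simp add: act_word.simps(2) Cons.IH[OF s])
  also have "\<dots> = (if length (replicate k Z1 @ s) = length t - 1 then act_gen y (replicate k Z1 @ s) t else 0)"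
    by (rule sum_words_delta)
  also have "\<dots> = (if t = replicate k Z1 @ y # s then 1 else 0)"
    using y s by (auto simp: act_gen_def act_B_Z1_pow)
  finally show ?case .
qed simp

lemma rho_B_supported:
  assumes "supported F {Z2, Z22}"
  shows "rho F (replicate k Z1) t = fa_mult (fa_mono (replicate k Z1)) F t"
proof -
  have "F s * act_word s (replicate k Z1) t
      = (if s = drop k t then (if take k t = replicate k Z1 then F (drop k t) else 0) else 0)" for s
  proof (cases "F s = 0")
    case False
    then have "set s \<subseteq> {Z2, Z22}" using assms by (auto simp: supported_def)
    then show ?thesis
      using append_eq_conv_conj[of "replicate k Z1" s t] by (auto simp: act_word_B_word)
  qed auto
  then have "rho F (replicate k Z1) t = (\<Sum>s\<in>words (length t - k).
      if s = drop k t then (if take k t = replicate k Z1 then F (drop k t) else 0) else 0)"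
    by (simp add: rho_def)
  also have "\<dots> = fa_mult (fa_mono (replicate k Z1)) F t"
    by (simp add: sum.delta' fa_mult_mono_left)
  finally show ?thesis .
qed

lemma rho_mult_A_gen_left:
  "A_gen g \<Longrightarrow> rho (fa_mult (fa_gen g) F) v t = (case t of [] \<Rightarrow> 0 | a # r \<Rightarrow> if a = g then rho F v r else 0)"
  unfolding fa_gen_def rho_mult_mono_left using sum_act_gen_A[of g t "rho F v"]
  by (simp add: act_word_single)

lemma rho_mult_A_gen_right:
  assumes "A_gen g"
  shows "rho (fa_mult F (fa_gen g)) v t = rho F (g # v) t"
proof -
  have "rho (fa_mult F (fa_gen g)) v t
      = (\<Sum>t'\<in>words (Suc (length v)). rho F t' t * (if t' = g # v then 1 else 0))"
    unfolding fa_gen_def rho_mult_mono_right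
    using assms by (intro sum.cong) (auto simp: act_word_single act_gen_def)
  then show ?thesis by (simp add: sum_words_delta)
qed

lemma fa_mult_comm_Z1_Z1_pow:
  "fa_mult (fa_mult (fa_comm (fa_gen Z1) a) (fa_mono (replicate k Z1))) G =
   fa_sub (fa_mult (fa_gen Z1) (fa_mult (fa_mult a (fa_mono (replicate k Z1))) G))
          (fa_mult (fa_mult a (fa_mono (replicate (Suc k) Z1))) G)"
proof -
  have "fa_mono (replicate (Suc k) Z1) = fa_mult (fa_gen Z1) (fa_mono (replicate k Z1))"
    by (simp add: fa_gen_def fa_mult_mono_mono)
  then show ?thesis by (simp add: fa_comm_def fa_mult_sub_left fa_mult_assoc)
qed

text \<open>The right half of \<open>ad Z1 = \<mu>(Z1) - (right multiplication by Z1)\<close> moves \<open>Z1\<close> into the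
  vector argument of \<open>rho\<close>, hence the generalisation to the vectors \<open>Z1\<^sup>k\<close>.\<close>
lemma rho_alpha_A_word:
  assumes "set W \<subseteq> {Z1, Z11, Z12}" "supported G {Z2, Z22}"
  shows "rho (alpha W G) (replicate k Z1) t
    = fa_mult (fa_mult (alpha W fa_one) (fa_mono (replicate k Z1))) G t"
  using assms(1)
proof (induction W arbitrary: k t)
  case Nil
  then show ?case using assms(2) by (simp add: rho_B_supported)
next
  case (Cons g W)
  then have IH: "\<And>k t. rho (alpha W G) (replicate k Z1) t
      = fa_mult (fa_mult (alpha W fa_one) (fa_mono (replicate k Z1))) G t"
    and g: "g \<in> {Z1, Z11, Z12}" by auto
  show ?case
  proof (cases "g = Z1")
    case True
    have "rho (alpha (g # W) G) (replicate k Z1) t =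
        (case t of [] \<Rightarrow> 0 | a # r \<Rightarrow> if a = Z1 then rho (alpha W G) (replicate k Z1) r else 0)
        - rho (alpha W G) (replicate (Suc k) Z1) t"
      using True by (simp add: fa_comm_def rho_sub rho_mult_A_gen_left rho_mult_A_gen_right)
    also have "\<dots> = fa_mult (fa_mult (alpha (g # W) fa_one) (fa_mono (replicate k Z1))) G t"
      using True
      by (simp only: IH alpha.simps alpha_gen.simps fa_mult_comm_Z1_Z1_pow)
        (simp add: fa_sub_def fa_mult_gen_left)
    finally show ?thesis .
  next
    case False
    then have gA: "A_gen g" "alpha_gen g F = fa_mult (fa_gen g) F" for F using g by auto
    have "rho (alpha (g # W) G) (replicate k Z1) t
        = (case t of [] \<Rightarrow> 0 | a # r \<Rightarrow> if a = g then rho (alpha W G) (replicate k Z1) r else 0)"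
      by (simp only: alpha.simps gA(2) rho_mult_A_gen_left[OF gA(1)])
    also have "\<dots> = fa_mult (fa_gen g) (fa_mult (fa_mult (alpha W fa_one) (fa_mono (replicate k Z1))) G) t"
      by (simp only: IH fa_mult_gen_left)
    also have "\<dots> = fa_mult (fa_mult (alpha (g # W) fa_one) (fa_mono (replicate k Z1))) G t"
      by (simp only: alpha.simps gA(2) fa_mult_assoc)
    finally show ?thesis .
  qed
qed

lemma rho_elemU:
  assumes "set W1 \<subseteq> {Z1, Z11, Z12}" "set W2 \<subseteq> {Z2, Z22}"
  shows "rho (elemU (W1, W2)) [] t = fa_mult (alpha W1 fa_one) (alpha W2 fa_one) t"
proof -
  have "supported (alpha W2 fa_one) {Z2, Z22}"
    using assms(2) by (intro supported_alpha supported_one)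
  from rho_alpha_A_word[OF assms(1) this, of 0 t] show ?thesis
    by (simp add: elemU_def fa_one_eq_mono[symmetric])
qed

section \<open>Linear independence in the free algebra\<close>

definition lin_indep_fa :: "'i set \<Rightarrow> ('i \<Rightarrow> fa) \<Rightarrow> bool" where
  "lin_indep_fa J f \<longleftrightarrow> (\<forall>S c. finite S \<longrightarrow> S \<subseteq> J \<longrightarrow> (\<forall>t. (\<Sum>p\<in>S. c p * f p t) = 0)
      \<longrightarrow> (\<forall>p\<in>S. c p = 0))"

lemma lin_indep_faD:
  "lin_indep_fa J f \<Longrightarrow> finite S \<Longrightarrow> S \<subseteq> J \<Longrightarrow> (\<And>t. (\<Sum>p\<in>S. c p * f p t) = 0) \<Longrightarrow> p \<in> S
    \<Longrightarrow> c p = 0"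
  unfolding lin_indep_fa_def by blast

lemma lin_indep_U_by_rho:
  assumes indep: "lin_indep_fa J h" and rho_f: "\<And>p t. p \<in> J \<Longrightarrow> rho (f p) v t = h p t"
  shows "lin_indep_U J f"
  unfolding lin_indep_U_def
proof (intro allI impI ballI)
  fix S c p
  assume S: "finite S" "S \<subseteq> J" and I: "(\<lambda>w. \<Sum>p\<in>S. c p * f p w) \<in> X_ideal" and p: "p \<in> S"
  have "(\<Sum>p\<in>S. c p * h p t) = 0" for t
  proof -
    have "(\<Sum>p\<in>S. c p * h p t) = (\<Sum>p\<in>S. c p * rho (f p) v t)"
      using S rho_f by (auto intro!: sum.cong)
    also have "\<dots> = rho (\<lambda>w. \<Sum>p\<in>S. c p * f p w) v t"
      by (rule rho_lincomb[symmetric])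
    also have "\<dots> = 0"
      using I by (rule rho_ideal)
    finally show ?thesis .
  qed
  then show "c p = 0" using lin_indep_faD[OF indep S] p by blast
qed

lemma lin_indep_fa_triangular:
  fixes r :: "'i \<Rightarrow> 'k::linorder"
  assumes inj: "inj_on r J"
    and diag: "\<And>W. W \<in> J \<Longrightarrow> f W (key W) = 1"
    and tri: "\<And>W W'. W \<in> J \<Longrightarrow> W' \<in> J \<Longrightarrow> f W' (key W) \<noteq> 0 \<Longrightarrow> r W' \<le> r W"
  shows "lin_indep_fa J f"
  unfolding lin_indep_fa_def
proof (intro allI impI ballI)
  fix S c p
  assume S: "finite S" "S \<subseteq> J" and eq: "\<forall>t. (\<Sum>p\<in>S. c p * f p t) = 0" and p: "p \<in> S"
  show "c p = 0"
  proof (rule ccontr)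
    assume "c p \<noteq> 0"
    define T where "T = {q\<in>S. c q \<noteq> 0}"
    have T: "finite T" "T \<noteq> {}" using S p \<open>c p \<noteq> 0\<close> by (auto simp: T_def)
    have "Min (r ` T) \<in> r ` T" using T by (intro Min_in) auto
    then obtain W where W: "W \<in> T" "r W = Min (r ` T)" by auto
    have min: "r W \<le> r q" if "q \<in> T" for q using T W that by auto
    have "c q * f q (key W) = 0" if q: "q \<in> S - {W}" for q
    proof (rule ccontr)
      assume "c q * f q (key W) \<noteq> 0"
      then have "q \<in> T" "r q \<le> r W" using q S W tri[of W q] by (auto simp: T_def)
      have "q \<in> J" "W \<in> J" using q S W by (auto simp: T_def)
      then have "r q \<noteq> r W" using inj q by (metis DiffE inj_onD singletonI)
      then show False using min \<open>q \<in> T\<close> \<open>r q \<le> r W\<close> by force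
    qed
    then have "(\<Sum>q\<in>S - {W}. c q * f q (key W)) = 0" by (rule sum.neutral[rule_format])
    then have "(\<Sum>q\<in>S. c q * f q (key W)) = c W * f W (key W)"
      using S W by (subst sum.remove[of _ W]) (auto simp: T_def)
    then show False using eq diag W S by (auto simp: T_def)
  qed
qed

lemma fa_mult_append_disjoint_supports:
  assumes F: "supported F A" and G: "supported G B" and AB: "A \<inter> B = {}"
    and u: "set u \<subseteq> A" and v: "set v \<subseteq> B"
  shows "fa_mult F G (u @ v) = F u * G v"
proof -
  have "F (take i (u @ v)) * G (drop i (u @ v)) = 0" if i: "i \<le> length (u @ v)" "i \<noteq> length u" for i
  proof (cases "i < length u")
    case True
    then have hd: "hd (drop i u) \<in> set (drop i u)" by (simp add: hd_in_set)
    then have "hd (drop i u) \<in> set (drop i (u @ v))" using True by simp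
    moreover have "hd (drop i u) \<in> A" using hd u set_drop_subset[of i u] by blast
    ultimately have "\<not> set (drop i (u @ v)) \<subseteq> B" using AB by blast
    then have "G (drop i (u @ v)) = 0" using G unfolding supported_def by blast
    then show ?thesis by simp
  next
    case False
    then have tk: "take i (u @ v) = u @ take (i - length u) v" "take (i - length u) v \<noteq> []"
      using i by auto
    have "hd (take (i - length u) v) \<in> set (take (i - length u) v)"
      using tk(2) by (rule hd_in_set)
    then have "hd v \<in> set (take i (u @ v))" using tk by simp
    moreover have "hd v \<in> B" using v tk(2) by (auto intro: hd_in_set)
    ultimately have "\<not> set (take i (u @ v)) \<subseteq> A" using AB by blast
    then have "F (take i (u @ v)) = 0" using F unfolding supported_def by blast
    then show ?thesis by simp
  qed
  then have "fa_mult F G (u @ v) = (\<Sum>i\<le>length (u @ v). if i = length u then F u * G v else 0)"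
    unfolding fa_mult_def by (intro sum.cong) auto
  then show ?thesis by (simp add: sum.delta)
qed

lemma sum_pairs_factor:
  fixes h :: "'i \<times> 'j \<Rightarrow> gen list \<Rightarrow> complex"
  assumes "finite S1" "finite S2" "S \<subseteq> S1 \<times> S2"
    and h: "\<And>p q. p \<in> S1 \<Longrightarrow> q \<in> S2 \<Longrightarrow> h (p, q) w = f p u * g q v"
  shows "(\<Sum>x\<in>S. c x * h x w)
    = (\<Sum>q\<in>S2. (\<Sum>p\<in>S1. (if (p, q) \<in> S then c (p, q) else 0) * f p u) * g q v)"
proof -
  have "(\<Sum>x\<in>S. c x * h x w) = (\<Sum>x\<in>S1 \<times> S2. (if x \<in> S then c x else 0) * h x w)"
    using assms(1-3) by (intro sum.mono_neutral_cong_left) auto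
  also have "\<dots> = (\<Sum>p\<in>S1. \<Sum>q\<in>S2. (if (p, q) \<in> S then c (p, q) else 0) * f p u * g q v)"
    unfolding sum.cartesian_product split_def by (intro sum.cong refl) (auto simp: h mult.assoc)
  also have "\<dots> = (\<Sum>q\<in>S2. (\<Sum>p\<in>S1. (if (p, q) \<in> S then c (p, q) else 0) * f p u) * g q v)"
    by (subst sum.swap) (simp add: sum_distrib_right)
  finally show ?thesis .
qed

lemma lin_indep_fa_product:
  assumes f: "lin_indep_fa J1 f" and g: "lin_indep_fa J2 g"
    and f_supp: "\<And>p. p \<in> J1 \<Longrightarrow> supported (f p) A" and g_supp: "\<And>q. q \<in> J2 \<Longrightarrow> supported (g q) B"
    and h: "\<And>p q u v. p \<in> J1 \<Longrightarrow> q \<in> J2 \<Longrightarrow> set u \<subseteq> A \<Longrightarrow> set v \<subseteq> B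
      \<Longrightarrow> h (p, q) (u @ v) = f p u * g q v"
  shows "lin_indep_fa (J1 \<times> J2) h"
  unfolding lin_indep_fa_def
proof (intro allI impI ballI)
  fix S c x
  assume S: "finite S" "S \<subseteq> J1 \<times> J2" and eq: "\<forall>t. (\<Sum>p\<in>S. c p * h p t) = 0" and x: "x \<in> S"
  define S1 where "S1 = fst ` S"
  define S2 where "S2 = snd ` S"
  define d where "d p q = (if (p, q) \<in> S then c (p, q) else 0)" for p q
  have S12: "finite S1" "finite S2" "S1 \<subseteq> J1" "S2 \<subseteq> J2" "S \<subseteq> S1 \<times> S2"
    using S by (auto simp: S1_def S2_def subset_fst_snd)
  have d_col: "(\<Sum>p\<in>S1. d p q * f p u) = 0" if q: "q \<in> S2" for q u
  proof (cases "set u \<subseteq> A")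
    case u: True
    have "(\<Sum>q\<in>S2. (\<Sum>p\<in>S1. d p q * f p u) * g q v) = 0" for v
    proof (cases "set v \<subseteq> B")
      case True
      then have "h (p, q) (u @ v) = f p u * g q v" if "p \<in> S1" "q \<in> S2" for p q
        using that S12 u by (intro h) auto
      then show ?thesis
        using sum_pairs_factor[OF S12(1,2,5), of h "u @ v" f u g v c] eq by (simp add: d_def)
    next
      case False
      then have "g q v = 0" if "q \<in> S2" for q using that g_supp S12 unfolding supported_def by blast
      then show ?thesis by simp
    qed
    then show ?thesis
      using lin_indep_faD[OF g S12(2,4), where c="\<lambda>q. \<Sum>p\<in>S1. d p q * f p u", OF _ q] by blast
  next
    case False
    then have "f p u = 0" if "p \<in> S1" for p using that f_supp S12 unfolding supported_def by blast
    then show ?thesis by simp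
  qed
  have "fst x \<in> S1" "snd x \<in> S2" using x by (auto simp: S1_def S2_def)
  then have "d (fst x) (snd x) = 0"
    using lin_indep_faD[OF f S12(1,3), where c="\<lambda>p. d p (snd x)"] d_col by blast
  then show "c x = 0" using x by (simp add: d_def)
qed

section \<open>The elements \<open>\<alpha>(W)1\<close> of the free algebra\<close>

lemma alpha_gen_nonzero_cases:
  assumes "alpha_gen g F s \<noteq> 0"
  shows "(\<exists>r. s = g # r \<and> F r \<noteq> 0) \<or> (g \<in> {Z1, Z2} \<and> (\<exists>r. s = r @ [g] \<and> F r \<noteq> 0))"
proof -
  have left: "\<exists>r. s = g # r \<and> F r \<noteq> 0" if "fa_mult (fa_gen g) F s \<noteq> 0"
    using that by (auto simp: fa_mult_gen_left split: list.splits if_splits)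
  have right: "\<exists>r. s = r @ [g] \<and> F r \<noteq> 0" if "fa_mult F (fa_gen g) s \<noteq> 0"
    using that by (auto simp: fa_mult_gen_right split: if_splits intro!: exI[of _ "butlast s"])
  show ?thesis
  proof (cases "g \<in> {Z1, Z2}")
    case True
    then have "alpha_gen g F s = fa_mult (fa_gen g) F s - fa_mult F (fa_gen g) s"
      by (auto simp: fa_comm_def fa_sub_def)
    then show ?thesis using left right True assms by fastforce
  next
    case False
    then have "alpha_gen g F s = fa_mult (fa_gen g) F s" by (cases g) auto
    then show ?thesis using left assms by auto
  qed
qed

lemma length_alpha_one: "alpha W fa_one s \<noteq> 0 \<Longrightarrow> length s = length W"
proof (induction W arbitrary: s)
  case Nil
  then show ?case by (simp add: fa_one_def split: if_splits)
next
  case (Cons g W)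
  then show ?case using alpha_gen_nonzero_cases[of g "alpha W fa_one" s] by auto
qed

fun gen_index :: "gen \<Rightarrow> nat" where
  "gen_index Z1 = 0" | "gen_index Z11 = 1" | "gen_index Z2 = 2" | "gen_index Z22 = 3" | "gen_index Z12 = 4"

definition rank_least :: "gen \<Rightarrow> gen \<Rightarrow> nat" where
  "rank_least z g = (if g = z then 0 else Suc (gen_index g))"

lemma inj_rank_least: "inj (rank_least z)"
proof (rule injI)
  fix a b assume "rank_least z a = rank_least z b"
  then show "a = b" by (cases a; cases b; cases z) (auto simp: rank_least_def split: if_splits)
qed

lemma Cons_zero_less_snoc_zero:
  "length xs = length ys \<Longrightarrow> ys \<le> xs \<Longrightarrow> (\<exists>y\<in>set ys. y \<noteq> 0) \<Longrightarrow> (0::nat) # ys < xs @ [0]"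
proof (induction xs arbitrary: ys)
  case (Cons x xs)
  then obtain y ys' where ys: "ys = y # ys'" by (cases ys) auto
  show ?case
  proof (cases "x = 0")
    case True
    then have "y = 0" "ys' \<le> xs" using Cons.prems ys by auto
    then show ?thesis using Cons.IH[of ys'] Cons.prems ys True by auto
  qed (use ys in simp)
qed simp

text \<open>Letters from \<open>M\<close> only prepend, while \<open>ad z\<close> may also append \<open>z\<close>; as \<open>W\<close> does not end in \<open>z\<close>
  and \<open>z\<close> has the least rank, appending increases the word lexicographically.\<close>
lemma alpha_one_nonzero_lex_le:
  assumes z: "z \<in> {Z1, Z2}" and M: "M \<inter> {Z1, Z2} = {}"
  shows "set W \<subseteq> insert z M \<Longrightarrow> (W = [] \<or> last W \<noteq> z) \<Longrightarrow> alpha W fa_one s \<noteq> 0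
     \<Longrightarrow> map (rank_least z) W \<le> map (rank_least z) s"
proof (induction W arbitrary: s)
  case Nil
  then show ?case by (simp add: fa_one_def split: if_splits)
next
  case (Cons g W)
  have W: "set W \<subseteq> insert z M" "W = [] \<or> last W \<noteq> z" using Cons.prems by (auto split: if_splits)
  from alpha_gen_nonzero_cases[of g "alpha W fa_one" s] Cons.prems(3)
  consider (prepend) r where "s = g # r" "alpha W fa_one r \<noteq> 0"
    | (append) r where "g \<in> {Z1, Z2}" "s = r @ [g]" "alpha W fa_one r \<noteq> 0"
    by auto
  then show ?case
  proof cases
    case prepend
    then show ?thesis using Cons.IH[OF W] by simp
  next
    case append
    have gz: "g = z" using append(1) Cons.prems(1) M by auto
    then have "W \<noteq> []" "last W \<noteq> z" using Cons.prems(2) by auto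
    then have "\<exists>y\<in>set (map (rank_least z) W). y \<noteq> 0"
      by (intro bexI[of _ "rank_least z (last W)"]) (auto simp: rank_least_def)
    then have "0 # map (rank_least z) W < map (rank_least z) r @ [0]"
      using Cons.IH[OF W append(3)] length_alpha_one[OF append(3)]
      by (intro Cons_zero_less_snoc_zero) auto
    moreover have "rank_least z z = 0" by (simp add: rank_least_def)
    ultimately show ?thesis using append(2) gz by (simp add: order.strict_implies_order)
  qed
qed

lemma alpha_one_at_self:
  assumes z: "z \<in> {Z1, Z2}" and M: "M \<inter> {Z1, Z2} = {}"
  shows "set W \<subseteq> insert z M \<Longrightarrow> (W = [] \<or> last W \<noteq> z) \<Longrightarrow> alpha W fa_one W = 1"
proof (induction W)
  case Nil
  then show ?case by (simp add: fa_one_def)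
next
  case (Cons g W)
  have W: "set W \<subseteq> insert z M" "W = [] \<or> last W \<noteq> z" using Cons.prems by (auto split: if_splits)
  show ?case
  proof (cases "g = z")
    case True
    then have "last (g # W) \<noteq> g" using Cons.prems(2) by auto
    then show ?thesis using True z Cons.IH[OF W]
      by (auto simp: fa_comm_def fa_sub_def fa_mult_gen_left fa_mult_gen_right)
  next
    case False
    then have "g \<notin> {Z1, Z2}" using Cons.prems(1) M by auto
    then have "alpha_gen g F = fa_mult (fa_gen g) F" for F by (cases g) auto
    then show ?thesis using Cons.IH[OF W] by (simp add: fa_mult_gen_left)
  qed
qed

lemma lin_indep_fa_alpha_one:
  assumes z: "z \<in> {Z1, Z2}" and M: "M \<inter> {Z1, Z2} = {}"
  shows "lin_indep_fa (W0 (insert z M)) (\<lambda>W. alpha W fa_one)"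
proof (rule lin_indep_fa_triangular[where r="map (rank_least z)" and key="\<lambda>W. W"])
  show "inj_on (map (rank_least z)) (W0 (insert z M))"
    using inj_rank_least by (meson inj_mapI inj_on_subset subset_UNIV)
  show "alpha W fa_one W = 1" if "W \<in> W0 (insert z M)" for W
    using that z by (intro alpha_one_at_self[OF z M]) (auto simp: W0_def)
  show "map (rank_least z) W' \<le> map (rank_least z) W"
    if "W \<in> W0 (insert z M)" "W' \<in> W0 (insert z M)" "alpha W' fa_one W \<noteq> 0" for W W'
    using that z by (intro alpha_one_nonzero_lex_le[OF z M]) (auto simp: W0_def)
qed

lemma lin_indep_fa_alpha_products:
  "lin_indep_fa (W0 {Z1, Z11, Z12} \<times> W0 {Z2, Z22})
     (\<lambda>p. fa_mult (alpha (fst p) fa_one) (alpha (snd p) fa_one))"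
proof (rule lin_indep_fa_product[where A="{Z1, Z11, Z12}" and B="{Z2, Z22}"])
  show "lin_indep_fa (W0 {Z1, Z11, Z12}) (\<lambda>W. alpha W fa_one)"
    by (rule lin_indep_fa_alpha_one) auto
  show "lin_indep_fa (W0 {Z2, Z22}) (\<lambda>W. alpha W fa_one)"
    by (rule lin_indep_fa_alpha_one) auto
  show "supported (alpha W fa_one) {Z1, Z11, Z12}" if "W \<in> W0 {Z1, Z11, Z12}" for W
    using that by (intro supported_alpha supported_one) (auto simp: W0_def)
  show "supported (alpha W fa_one) {Z2, Z22}" if "W \<in> W0 {Z2, Z22}" for W
    using that by (intro supported_alpha supported_one) (auto simp: W0_def)
  show "fa_mult (alpha (fst (p, q)) fa_one) (alpha (snd (p, q)) fa_one) (u @ v)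
      = alpha p fa_one u * alpha q fa_one v"
    if "p \<in> W0 {Z1, Z11, Z12}" "q \<in> W0 {Z2, Z22}" "set u \<subseteq> {Z1, Z11, Z12}" "set v \<subseteq> {Z2, Z22}"
    for p q u v
    using that unfolding fst_conv snd_conv
    by (intro fa_mult_append_disjoint_supports supported_alpha supported_one) (auto simp: W0_def)
qed

lemma lin_indep_U_W0_12: "lin_indep_U (W0 {Z1, Z11, Z12} \<times> W0 {Z2, Z22}) elemU"
proof (rule lin_indep_U_by_rho[OF lin_indep_fa_alpha_products])
  fix p t
  assume "p \<in> W0 {Z1, Z11, Z12} \<times> W0 {Z2, Z22}"
  then show "rho (elemU p) [] t = fa_mult (alpha (fst p) fa_one) (alpha (snd p) fa_one) t"
    by (cases p) (simp add: W0_def rho_elemU)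
qed

section \<open>Exchanging the indices 1 and 2\<close>

fun swap_gen :: "gen \<Rightarrow> gen" where
  "swap_gen Z1 = Z2" | "swap_gen Z2 = Z1" | "swap_gen Z11 = Z22" | "swap_gen Z22 = Z11"
| "swap_gen Z12 = Z12"

lemma swap_gen_swap_gen [simp]: "swap_gen (swap_gen g) = g"
  by (cases g) auto

lemma swap_gen_comp_swap_gen [simp]: "swap_gen \<circ> swap_gen = id"
  by (simp add: fun_eq_iff)

definition fa_swap :: "fa \<Rightarrow> fa" where
  "fa_swap F = (\<lambda>w. F (map swap_gen w))"

lemma fa_swap_mult: "fa_swap (fa_mult p q) = fa_mult (fa_swap p) (fa_swap q)"
  by (simp add: fun_eq_iff fa_swap_def fa_mult_def take_map drop_map)

lemma fa_swap_mono: "fa_swap (fa_mono u) = fa_mono (map swap_gen u)"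
  by (auto simp: fun_eq_iff fa_swap_def fa_mono_def)

lemma fa_swap_gen: "fa_swap (fa_gen g) = fa_gen (swap_gen g)"
  by (simp add: fa_gen_def fa_swap_mono)

lemma fa_swap_one: "fa_swap fa_one = fa_one"
  by (simp add: fa_one_eq_mono fa_swap_mono)

lemma fa_swap_add: "fa_swap (fa_add p q) = fa_add (fa_swap p) (fa_swap q)"
  by (simp add: fun_eq_iff fa_swap_def fa_add_def)

lemma fa_swap_sub: "fa_swap (fa_sub p q) = fa_sub (fa_swap p) (fa_swap q)"
  by (simp add: fun_eq_iff fa_swap_def fa_sub_def)

lemma fa_swap_smult: "fa_swap (fa_smult c p) = fa_smult c (fa_swap p)"
  by (simp add: fun_eq_iff fa_swap_def fa_smult_def)

lemma fa_swap_comm: "fa_swap (fa_comm p q) = fa_comm (fa_swap p) (fa_swap q)"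
  by (simp add: fa_comm_def fa_swap_sub fa_swap_mult)

lemma fa_swap_alpha: "fa_swap (alpha W F) = alpha (map swap_gen W) (fa_swap F)"
proof (induction W)
  case (Cons g W)
  then show ?case by (cases g) (simp_all add: fa_swap_comm fa_swap_mult fa_swap_gen)
qed simp

lemma fa_swap_elemU: "fa_swap (elemU p) = elemU (map_prod (map swap_gen) (map swap_gen) p)"
  by (simp add: elemU_def fa_swap_alpha fa_swap_one)

lemma fa_comm_gen_gen: "fa_comm (fa_gen a) (fa_gen b) = fa_sub (fa_mono [a, b]) (fa_mono [b, a])"
  by (simp add: fa_comm_def fa_mult_gen_gen)

lemma fa_comm_sub_gen:
  "fa_comm (fa_sub (fa_gen a) (fa_gen b)) (fa_gen c) =
   fa_sub (fa_sub (fa_mono [a, c]) (fa_mono [b, c])) (fa_sub (fa_mono [c, a]) (fa_mono [c, b]))"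
  by (simp add: fa_comm_def fa_mult_gen_gen fa_mult_sub_left fa_mult_sub_right)

lemma fa_swap_rel:
  assumes "r \<in> X_rels"
  shows "fa_swap r \<in> X_ideal"
proof -
  define R1 where "R1 = fa_comm (fa_gen Z1) (fa_gen Z2)"
  define R2 where "R2 = fa_comm (fa_gen Z11) (fa_gen Z2)"
  define R3 where "R3 = fa_comm (fa_gen Z1) (fa_gen Z22)"
  define R4 where "R4 = fa_add (fa_comm (fa_gen Z11) (fa_gen Z22)) (fa_comm (fa_gen Z11) (fa_gen Z12))"
  define R5 where "R5 = fa_add (fa_comm (fa_gen Z11) (fa_gen Z22))
    (fa_comm (fa_sub (fa_gen Z1) (fa_gen Z2)) (fa_gen Z12))"
  define R6 where "R6 = fa_add (fa_comm (fa_gen Z22) (fa_gen Z12))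
    (fa_comm (fa_sub (fa_gen Z1) (fa_gen Z2)) (fa_gen Z12))"
  note R_defs = R1_def R2_def R3_def R4_def R5_def R6_def
  have rels: "X_rels = {R1, R2, R3, R4, R5, R6}"
    unfolding X_rels_def R_defs ..
  then have R: "R1 \<in> X_ideal" "R2 \<in> X_ideal" "R3 \<in> X_ideal" "R4 \<in> X_ideal" "R5 \<in> X_ideal" "R6 \<in> X_ideal"
    by (auto intro: X_ideal.rel)
  have "fa_swap R1 = fa_smult (-1) R1" "fa_swap R2 = fa_smult (-1) R3" "fa_swap R3 = fa_smult (-1) R2"
    "fa_swap R4 = fa_add R6 (fa_smult (-1) R5)" "fa_swap R5 = fa_smult (-1) R5"
    "fa_swap R6 = fa_add R4 (fa_smult (-1) R5)"
    unfolding R_defs fa_comm_gen_gen fa_comm_sub_gen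
    by (simp_all only: fa_swap_sub fa_swap_add fa_swap_mono list.map swap_gen.simps)
      (simp_all add: fun_eq_iff fa_sub_def fa_add_def fa_smult_def)
  then have "fa_swap R \<in> X_ideal" if "R \<in> {R1, R2, R3, R4, R5, R6}" for R
    using that R by (auto intro!: X_ideal.add X_ideal.smult)
  then show ?thesis using assms rels by blast
qed

lemma fa_swap_ideal: "a \<in> X_ideal \<Longrightarrow> fa_swap a \<in> X_ideal"
proof (induction rule: X_ideal.induct)
  case (rel r)
  then show ?case by (rule fa_swap_rel)
next
  case zero
  then show ?case by (simp add: fa_swap_def fa_zero_def X_ideal.zero[unfolded fa_zero_def])
next
  case (add a b)
  then show ?case by (simp add: fa_swap_add X_ideal.add)
next
  case (smult a c)
  then show ?case by (simp add: fa_swap_smult X_ideal.smult)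
next
  case (lmult a u)
  then show ?case by (simp add: fa_swap_mult fa_swap_mono X_ideal.lmult)
next
  case (rmult a u)
  then show ?case by (simp add: fa_swap_mult fa_swap_mono X_ideal.rmult)
qed

lemma lin_indep_UD:
  "lin_indep_U J f \<Longrightarrow> finite S \<Longrightarrow> S \<subseteq> J \<Longrightarrow> (\<lambda>w. \<Sum>p\<in>S. c p * f p w) \<in> X_ideal \<Longrightarrow> p \<in> S
    \<Longrightarrow> c p = 0"
  unfolding lin_indep_U_def by blast

lemma lin_indep_U_swap:
  assumes indep: "lin_indep_U J elemU"
  shows "lin_indep_U (map_prod (map swap_gen) (map swap_gen) ` J) elemU"
  unfolding lin_indep_U_def
proof (intro allI impI ballI)
  let ?\<sigma> = "map_prod (map swap_gen) (map swap_gen)"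
  have \<sigma>\<sigma>: "?\<sigma> (?\<sigma> p) = p" for p by (cases p) simp
  fix S c p
  assume S: "finite S" "S \<subseteq> ?\<sigma> ` J" and I: "(\<lambda>w. \<Sum>p\<in>S. c p * elemU p w) \<in> X_ideal" and p: "p \<in> S"
  have inj: "inj_on ?\<sigma> S" by (metis \<sigma>\<sigma> inj_onI)
  have "fa_swap (\<lambda>w. \<Sum>p\<in>S. c p * elemU p w) = (\<lambda>w. \<Sum>p\<in>S. c p * elemU (?\<sigma> p) w)"
    using fa_swap_elemU by (simp add: fun_eq_iff fa_swap_def)
  also have "\<dots> = (\<lambda>w. \<Sum>q\<in>?\<sigma> ` S. c (?\<sigma> q) * elemU q w)"
    by (simp add: sum.reindex[OF inj] \<sigma>\<sigma>)
  finally have I': "(\<lambda>w. \<Sum>q\<in>?\<sigma> ` S. c (?\<sigma> q) * elemU q w) \<in> X_ideal"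
    using fa_swap_ideal[OF I] by simp
  have S': "?\<sigma> ` S \<subseteq> J"
  proof
    fix q assume "q \<in> ?\<sigma> ` S"
    then obtain p' where q: "q = ?\<sigma> p'" and "p' \<in> S" by (rule imageE)
    then have "p' \<in> ?\<sigma> ` J" using S(2) by blast
    then obtain j where "p' = ?\<sigma> j" "j \<in> J" by (rule imageE)
    then show "q \<in> J" using q by (simp add: \<sigma>\<sigma>)
  qed
  have "?\<sigma> p \<in> ?\<sigma> ` S" using p by simp
  then have "c (?\<sigma> (?\<sigma> p)) = 0"
    by (rule lin_indep_UD[OF indep finite_imageI[OF S(1)] S' I'])
  then show "c p = 0" by (simp add: \<sigma>\<sigma>)
qed

lemma map_swap_gen_W0:
  assumes "w \<in> W0 G"
  shows "map swap_gen w \<in> W0 (swap_gen ` G)"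
proof -
  have "w \<noteq> [] \<Longrightarrow> swap_gen (last w) \<notin> {Z1, Z2}"
    using assms by (cases "last w") (auto simp: W0_def)
  then show ?thesis using assms by (auto simp: W0_def last_map)
qed

lemma image_map_swap_gen_W0: "map swap_gen ` W0 G = W0 (swap_gen ` G)"
proof
  show "W0 (swap_gen ` G) \<subseteq> map swap_gen ` W0 G"
  proof
    fix w assume "w \<in> W0 (swap_gen ` G)"
    then have "map swap_gen w \<in> W0 G"
      using map_swap_gen_W0[of w "swap_gen ` G"] by (simp add: image_image)
    then show "w \<in> map swap_gen ` W0 G" by (rule rev_image_eqI) simp
  qed
qed (use map_swap_gen_W0 in blast)

theorem lemma7p5:
  shows "lin_indep_U (W0 {Z1, Z11, Z12} \<times> W0 {Z2, Z22}) elemU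
       \<and> lin_indep_U (W0 {Z2, Z22, Z12} \<times> W0 {Z1, Z11}) elemU"
proof
  show "lin_indep_U (W0 {Z1, Z11, Z12} \<times> W0 {Z2, Z22}) elemU"
    by (rule lin_indep_U_W0_12)
  have "map_prod (map swap_gen) (map swap_gen) ` (W0 {Z1, Z11, Z12} \<times> W0 {Z2, Z22})
      = W0 {Z2, Z22, Z12} \<times> W0 {Z1, Z11}"
    by (rule map_prod_surj_on) (simp_all add: image_map_swap_gen_W0)
  then show "lin_indep_U (W0 {Z2, Z22, Z12} \<times> W0 {Z1, Z11}) elemU"
    using lin_indep_U_swap[OF lin_indep_U_W0_12] by simp
qed

end
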